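(* Let $m,n\geq 2$. Each of the following six functions is not Banach-Mazur computable: (I) $g_{\text{inv}}:\mathbb{C}^{m\times n}\to\mathbb{C}^{n\times m}$, $g_{\text{inv}}(A)=A^\dagger$; (II) $g_{\text{norm}}:\mathbb{C}^{m\times n}\to\mathbb{R}$, $g_{\text{norm}}(A)=\|A^\dagger\|_F$; (III) $\Psi_{\text{lsq}}:\mathbb{C}^{m\times n}\times\mathbb{C}^m\to\mathbb{R}$, $\Psi_{\text{lsq}}(A,b)=\min_{x\in\mathbb{C}^n}\|Ax-b\|_2$; (IV) $\Psi_{\text{sol}}:\mathbb{C}^{m\times n}\times\mathbb{C}^m\to\mathbb{C}^n$, $\Psi_{\text{sol}}(A,b)=\hat{x}_{(A,b)}$; (V) $\Psi_{\text{norm}}:\mathbb{C}^{m\times n}\times\mathbb{C}^m\to\mathbb{R}$, $\Psi_{\text{norm}}(A,b)=\|\hat{x}_{(A,b)}\|_2=\|A^\dagger b\|_2$; (VI) $\kappa:\mathbb{C}^{m\times n}\to\mathbb{R}$, $\kappa(A)=\|A\|_F\,\|A^\dagger\|_F$.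
   Context: For $A\in\mathbb{C}^{m\times n}$, $A^\dagger\in\mathbb{C}^{n\times m}$ denotes the Moore–Penrose pseudoinverse, the unique matrix with $AA^\dagger A=A$, $A^\dagger AA^\dagger=A^\dagger$, $(AA^\dagger)^H=AA^\dagger$, $(A^\dagger A)^H=A^\dagger A$. For $b\in\mathbb{C}^m$, $\hat{x}_{(A,b)}=A^\dagger b$ is the minimizer of $\|Ax-b\|_2$ over $x\in\mathbb{C}^n$ with minimal Euclidean norm. $\|\cdot\|_F$ is the Frobenius norm, $\|\cdot\|_2$ the Euclidean norm. Computability notions: a sequence $(r_k)_{k\in\mathbb{N}}\subset\mathbb{Q}$ is computable if $r_k=(-1)^{s(k)}a(k)/b(k)$ for recursive functions $a,b,s:\mathbb{N}\to\mathbb{N}$ with $b(k)\neq 0$ (analogously for multi-indexed sequences). A real number $x$ is computable if there is a computable sequence of rationals $(r_k)$ with $|r_k-x|\le 2^{-k}$ for all $k$; $\mathbb{R}_c$ denotes the computable reals. A sequence $(x_n)_{n}\subset\mathbb{R}$ is computable if there is a computable double sequence $(r_{n,k})\subset\mathbb{Q}$ with $|r_{n,k}-x_n|\le 2^{-k}$ for all $n,k$. Complex numbers, vectors, matrices (and sequences of these) are computable if all real and imaginary parts of all entries are computable (as sequences). A function $f$ defined on computable inputs (real/complex vectors, matrices, or matrix–vector pairs with computable entries) is Banach-Mazur computable if it maps every computable sequence of inputs in its domain to a computable sequence of outputs; for complex-valued functions this is required of the real and imaginary parts. *)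

theory Defs
  imports "HOL-Analysis.Analysis"
begin

datatype recf = Zero | Succ | Proj nat | Comp recf "recf list" | Prim recf recf | Mn recf

inductive eval :: "recf \<Rightarrow> nat list \<Rightarrow> nat \<Rightarrow> bool" where
  eval_Zero: "eval Zero xs 0"
| eval_Succ: "eval Succ (x # xs) (Suc x)"
| eval_Proj: "i < length xs \<Longrightarrow> eval (Proj i) xs (xs ! i)"
| eval_Comp: "list_all2 (\<lambda>g y. eval g xs y) gs ys \<Longrightarrow> eval f ys z \<Longrightarrow> eval (Comp f gs) xs z"
| eval_Prim0: "eval f xs y \<Longrightarrow> eval (Prim f g) (0 # xs) y"
| eval_PrimS: "eval (Prim f g) (n # xs) y \<Longrightarrow> eval g (y # n # xs) z \<Longrightarrow>
     eval (Prim f g) (Suc n # xs) z"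
| eval_Mn: "eval f (n # xs) 0 \<Longrightarrow> (\<forall>k<n. \<exists>y. eval f (k # xs) y \<and> 0 < y) \<Longrightarrow>
     eval (Mn f) xs n"

definition recursive2 :: "(nat \<Rightarrow> nat \<Rightarrow> nat) \<Rightarrow> bool" where
  "recursive2 f \<longleftrightarrow> (\<exists>r. \<forall>n k. eval r [n, k] (f n k))"

definition computable_rat_seq2 :: "(nat \<Rightarrow> nat \<Rightarrow> rat) \<Rightarrow> bool" where
  "computable_rat_seq2 q \<longleftrightarrow> (\<exists>a b s. recursive2 a \<and> recursive2 b \<and> recursive2 s \<and>
     (\<forall>n k. b n k \<noteq> 0 \<and> q n k = (-1) ^ (s n k) * of_nat (a n k) / of_nat (b n k)))"

definition computable_real_seq :: "(nat \<Rightarrow> real) \<Rightarrow> bool" where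
  "computable_real_seq x \<longleftrightarrow> (\<exists>q. computable_rat_seq2 q \<and>
     (\<forall>n k. \<bar>real_of_rat (q n k) - x n\<bar> \<le> 1 / 2 ^ k))"

definition computable_complex_seq :: "(nat \<Rightarrow> complex) \<Rightarrow> bool" where
  "computable_complex_seq z \<longleftrightarrow>
     computable_real_seq (\<lambda>k. Re (z k)) \<and> computable_real_seq (\<lambda>k. Im (z k))"

definition computable_cvec_seq :: "(nat \<Rightarrow> complex ^ 'n) \<Rightarrow> bool" where
  "computable_cvec_seq v \<longleftrightarrow> (\<forall>i. computable_complex_seq (\<lambda>k. v k $ i))"

definition computable_cmat_seq :: "(nat \<Rightarrow> complex ^ 'n ^ 'm) \<Rightarrow> bool" where
  "computable_cmat_seq A \<longleftrightarrow> (\<forall>i j. computable_complex_seq (\<lambda>k. A k $ i $ j))"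

definition computable_pair_seq :: "(nat \<Rightarrow> (complex ^ 'n ^ 'm) \<times> (complex ^ 'm)) \<Rightarrow> bool" where
  "computable_pair_seq s \<longleftrightarrow> computable_cmat_seq (\<lambda>k. fst (s k)) \<and> computable_cvec_seq (\<lambda>k. snd (s k))"

definition banach_mazur_computable ::
    "((nat \<Rightarrow> 'a) \<Rightarrow> bool) \<Rightarrow> ((nat \<Rightarrow> 'b) \<Rightarrow> bool) \<Rightarrow> ('a \<Rightarrow> 'b) \<Rightarrow> bool" where
  "banach_mazur_computable P Q f \<longleftrightarrow> (\<forall>s. P s \<longrightarrow> Q (\<lambda>k. f (s k)))"

definition adjoint_cmat :: "complex ^ 'n ^ 'm \<Rightarrow> complex ^ 'm ^ 'n" where
  "adjoint_cmat A = (\<chi> i j. cnj (A $ j $ i))"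

definition penrose :: "complex ^ 'n ^ 'm \<Rightarrow> complex ^ 'm ^ 'n \<Rightarrow> bool" where
  "penrose A X \<longleftrightarrow> A ** X ** A = A \<and> X ** A ** X = X \<and>
     adjoint_cmat (A ** X) = A ** X \<and> adjoint_cmat (X ** A) = X ** A"

definition pinv :: "complex ^ 'n ^ 'm \<Rightarrow> complex ^ 'm ^ 'n" where
  "pinv A = (THE X. penrose A X)"

definition frob_norm :: "complex ^ 'n ^ 'm \<Rightarrow> real" where
  "frob_norm A = sqrt (\<Sum>i\<in>UNIV. \<Sum>j\<in>UNIV. (cmod (A $ i $ j))\<^sup>2)"

definition lsq_value :: "complex ^ 'n ^ 'm \<Rightarrow> complex ^ 'm \<Rightarrow> real" where
  "lsq_value A b = Inf (range (\<lambda>x. norm (A *v x - b)))"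

definition lsq_solution :: "complex ^ 'n ^ 'm \<Rightarrow> complex ^ 'm \<Rightarrow> complex ^ 'n" where
  "lsq_solution A b = pinv A *v b"

end

theory Submission
  imports Defs "HOL-Library.Nat_Bijection"
begin

text \<open>
  Let \<open>x\<^sub>e = 2\<^sup>-\<^sup>t\<close> if program \<open>e\<close> halts on input \<open>e\<close>, where \<open>t\<close> is the least code of a
  halting computation, and \<open>x\<^sub>e = 0\<close> otherwise. The sequence \<open>(x\<^sub>e)\<close> is computable
  (the \<open>k\<close>-th approximation only inspects computations with code at most \<open>k\<close>), and so are
  the matrices \<open>A\<^sub>e = x\<^sub>e E\<^sub>i\<^sub>j\<close> and the right-hand side \<open>b = e\<^sub>i\<close>. But
  \<open>A\<^sub>e\<^sup>\<dagger> = x\<^sub>e\<^sup>-\<^sup>1 E\<^sub>j\<^sub>i\<close>, so each of the six quantities is \<open>\<ge> 1\<close> when \<open>e\<close> halts and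
  \<open>\<le> 0\<close> otherwise, or the other way round. A computable real sequence with values
  outside \<open>(0, 1)\<close> is compared with \<open>1\<close> by one rational approximation, so any of the
  six maps being Banach-Mazur computable would decide the halting problem.

  For the \<open>\<mu>\<close>-recursive terms of the definitions, the halting problem is undecidable by
  the usual diagonal argument, once halting is expressed recursively: a halting computation
  is coded as a finite table of evaluation facts, each justified by a rule of \<^const>\<open>eval\<close>
  from earlier entries, and checking such a table needs only bounded search.
\<close>

section \<open>Recursive functions\<close>

inductive_cases eval_ZeroE: "eval Zero xs y"
inductive_cases eval_SuccE: "eval Succ xs y"
inductive_cases eval_ProjE: "eval (Proj i) xs y"
inductive_cases eval_CompE: "eval (Comp f gs) xs y"
inductive_cases eval_PrimE: "eval (Prim f g) xs y"
inductive_cases eval_MnE: "eval (Mn f) xs y"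

lemma list_all2_right_unique:
  assumes "list_all2 (\<lambda>x y. P x y \<and> (\<forall>y'. P x y' \<longrightarrow> y = y')) xs ys" and "list_all2 P xs zs"
  shows "ys = zs"
  using assms
proof (induction xs ys arbitrary: zs rule: list_all2_induct)
  case Nil
  then show ?case by simp
next
  case (Cons x xs y ys)
  then show ?case by (cases zs) auto
qed

lemma eval_functional: "eval r xs y \<Longrightarrow> eval r xs y' \<Longrightarrow> y = y'"
proof (induction r xs y arbitrary: y' rule: eval.induct)
  case (eval_Zero xs)
  then show ?case by (blast elim: eval_ZeroE)
next
  case (eval_Succ x xs)
  then show ?case by (blast elim: eval_SuccE)
next
  case (eval_Proj i xs)
  then show ?case by (blast elim: eval_ProjE)
next
  case (eval_Comp xs gs ys f z)
  from eval_Comp.prems obtain ys' where "list_all2 (\<lambda>g. eval g xs) gs ys'" and "eval f ys' y'"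
    by (blast elim: eval_CompE)
  moreover from eval_Comp.IH(1) this(1) have "ys = ys'"
    by (rule list_all2_right_unique)
  ultimately show ?case using eval_Comp.IH(2) by blast
next
  case (eval_Prim0 f xs y g)
  from eval_Prim0.prems show ?case
    by (rule eval_PrimE) (use eval_Prim0.IH in auto)
next
  case (eval_PrimS f g n xs y z)
  from eval_PrimS.prems show ?case
    by (rule eval_PrimE) (use eval_PrimS.IH in auto)
next
  case (eval_Mn f n xs)
  from eval_Mn.prems obtain n' where n': "y' = n'" "eval f (n' # xs) 0"
    "\<forall>k<n'. \<exists>y. eval f (k # xs) y \<and> 0 < y"
    by (blast elim: eval_MnE)
  consider "n < n'" | "n' < n" | "n = n'" by linarith
  then show ?case
  proof cases
    case 1
    then obtain y where "eval f (n # xs) y" "0 < y" using n' by auto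
    then show ?thesis using eval_Mn.IH(1) by fastforce
  next
    case 2
    then obtain y where "eval f (n' # xs) y" "\<forall>y'. eval f (n' # xs) y' \<longrightarrow> y = y'" "0 < y"
      using eval_Mn.IH(2) by blast
    then show ?thesis using n' by fastforce
  qed (use n' in simp)
qed

definition recursive :: "nat \<Rightarrow> (nat list \<Rightarrow> nat) \<Rightarrow> bool" where
  "recursive n f \<longleftrightarrow> (\<exists>r. \<forall>xs. length xs = n \<longrightarrow> eval r xs (f xs))"

definition decidable :: "nat \<Rightarrow> (nat list \<Rightarrow> bool) \<Rightarrow> bool" where
  "decidable n P \<longleftrightarrow> recursive n (\<lambda>xs. if P xs then 1 else 0)"

lemma recursive_cong:
  "recursive n f \<Longrightarrow> (\<And>xs. length xs = n \<Longrightarrow> f xs = g xs) \<Longrightarrow> recursive n g"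
  unfolding recursive_def by metis

lemma decidable_cong:
  "decidable n P \<Longrightarrow> (\<And>xs. length xs = n \<Longrightarrow> P xs = Q xs) \<Longrightarrow> decidable n Q"
  unfolding decidable_def by (erule recursive_cong) auto

lemma recursive_const: "recursive n (\<lambda>xs. c)"
proof (induction c)
  case 0
  have "eval (Comp Zero []) xs 0" for xs
    by (rule eval_Comp[where ys="[]"]) (auto intro: eval_Zero)
  then show ?case unfolding recursive_def by blast
next
  case (Suc c)
  then obtain r where r: "\<forall>xs. length xs = n \<longrightarrow> eval r xs c" unfolding recursive_def by blast
  have "eval (Comp Succ [r]) xs (Suc c)" if "length xs = n" for xs
    by (rule eval_Comp[where ys="[c]"]) (auto intro: eval_Succ simp: r that)
  then show ?case unfolding recursive_def by blast
qed

lemma recursive_nth: "i < n \<Longrightarrow> recursive n (\<lambda>xs. xs ! i)"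
  unfolding recursive_def by (auto intro: eval_Proj)

lemma recursive_nth_tl:
  "Suc i < n \<Longrightarrow> recursive n (\<lambda>xs. tl xs ! i)"
  "Suc (Suc i) < n \<Longrightarrow> recursive n (\<lambda>xs. tl (tl xs) ! i)"
  "Suc (Suc (Suc i)) < n \<Longrightarrow> recursive n (\<lambda>xs. tl (tl (tl xs)) ! i)"
  by (rule recursive_cong[OF recursive_nth], assumption, simp add: nth_tl)+

lemma recursive_comp:
  assumes "recursive (length Fs) f" and "\<forall>F\<in>set Fs. recursive n F"
  shows "recursive n (\<lambda>xs. f (map (\<lambda>F. F xs) Fs))"
proof -
  have "\<exists>rs. \<forall>xs. length xs = n \<longrightarrow> list_all2 (\<lambda>r y. eval r xs y) rs (map (\<lambda>F. F xs) Fs)"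
    using assms(2)
  proof (induction Fs)
    case Nil
    then show ?case by auto
  next
    case (Cons F Fs)
    then obtain rs where "\<forall>xs. length xs = n \<longrightarrow> list_all2 (\<lambda>r y. eval r xs y) rs (map (\<lambda>F. F xs) Fs)"
      by auto
    moreover from Cons.prems obtain r where "\<forall>xs. length xs = n \<longrightarrow> eval r xs (F xs)"
      unfolding recursive_def by auto
    ultimately show ?case by (intro exI[of _ "r # rs"]) auto
  qed
  then obtain rs where rs: "\<forall>xs. length xs = n \<longrightarrow> list_all2 (\<lambda>r y. eval r xs y) rs (map (\<lambda>F. F xs) Fs)"
    by blast
  from assms(1) obtain rf where rf: "\<forall>ys. length ys = length Fs \<longrightarrow> eval rf ys (f ys)"
    unfolding recursive_def by blast
  have "eval (Comp rf rs) xs (f (map (\<lambda>F. F xs) Fs))" if "length xs = n" for xs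
    by (rule eval_Comp[where ys="map (\<lambda>F. F xs) Fs"]) (use rs rf that in auto)
  then show ?thesis unfolding recursive_def by blast
qed

lemma recursive_comp1:
  assumes "recursive 1 (\<lambda>xs. f (xs ! 0))" and "recursive n F"
  shows "recursive n (\<lambda>xs. f (F xs))"
proof -
  have "recursive n (\<lambda>xs. (\<lambda>ys. f (ys ! 0)) (map (\<lambda>H. H xs) [F]))"
    by (rule recursive_comp) (use assms in auto)
  then show ?thesis by simp
qed

lemma recursive_comp2:
  assumes "recursive 2 (\<lambda>xs. f (xs ! 0) (xs ! 1))" and "recursive n F" and "recursive n G"
  shows "recursive n (\<lambda>xs. f (F xs) (G xs))"
proof -
  have "recursive n (\<lambda>xs. (\<lambda>ys. f (ys ! 0) (ys ! 1)) (map (\<lambda>H. H xs) [F, G]))"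
    by (rule recursive_comp) (use assms in \<open>auto simp: numeral_2_eq_2\<close>)
  then show ?thesis by simp
qed

lemma recursive_Cons_arg:
  assumes "recursive (Suc n) F" and "recursive n B"
  shows "recursive n (\<lambda>xs. F (B xs # xs))"
proof -
  have "recursive n (\<lambda>xs. F (map (\<lambda>G. G xs) (B # map (\<lambda>i xs. xs ! i) [0..<n])))"
    by (rule recursive_comp) (use assms in \<open>auto intro: recursive_nth\<close>)
  then show ?thesis
  proof (rule recursive_cong)
    fix xs :: "nat list"
    assume "length xs = n"
    then have "map (\<lambda>i. xs ! i) [0..<n] = xs"
      by (metis map_nth)
    then show "F (map (\<lambda>G. G xs) (B # map (\<lambda>i xs. xs ! i) [0..<n])) = F (B xs # xs)"
      by (simp add: comp_def)
  qed
qed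

lemma recursive_tl_arg:
  assumes "recursive n F"
  shows "recursive (Suc n) (\<lambda>xs. F (tl xs))"
proof -
  have "recursive (Suc n) (\<lambda>xs. F (map (\<lambda>G. G xs) (map (\<lambda>i xs. xs ! Suc i) [0..<n])))"
    by (rule recursive_comp) (use assms in \<open>auto intro: recursive_nth\<close>)
  then show ?thesis
  proof (rule recursive_cong)
    fix xs :: "nat list"
    assume "length xs = Suc n"
    then have "map (\<lambda>i. xs ! Suc i) [0..<n] = tl xs"
      by (cases xs) (auto simp: map_nth[unfolded comp_def])
    then show "F (map (\<lambda>G. G xs) (map (\<lambda>i xs. xs ! Suc i) [0..<n])) = F (tl xs)"
      by (simp add: comp_def)
  qed
qed

primrec prim_rec :: "(nat list \<Rightarrow> nat) \<Rightarrow> (nat list \<Rightarrow> nat) \<Rightarrow> nat \<Rightarrow> nat list \<Rightarrow> nat" where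
  "prim_rec f g 0 ys = f ys"
| "prim_rec f g (Suc k) ys = g (prim_rec f g k ys # k # ys)"

lemma recursive_prim_rec:
  assumes "recursive n f" and "recursive (Suc (Suc n)) g"
  shows "recursive (Suc n) (\<lambda>xs. prim_rec f g (hd xs) (tl xs))"
proof -
  obtain rf where rf: "\<forall>ys. length ys = n \<longrightarrow> eval rf ys (f ys)"
    using assms(1) unfolding recursive_def by blast
  obtain rg where rg: "\<forall>ys. length ys = Suc (Suc n) \<longrightarrow> eval rg ys (g ys)"
    using assms(2) unfolding recursive_def by blast
  have "eval (Prim rf rg) (k # ys) (prim_rec f g k ys)" if "length ys = n" for k ys
    by (induction k) (use rf rg that in \<open>auto intro: eval_Prim0 eval_PrimS\<close>)
  then show ?thesis
    unfolding recursive_def by (metis length_Suc_conv list.sel(1,3))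
qed

lemma recursive_prim_rec_Cons_arg:
  assumes "recursive n f" and "recursive (Suc (Suc n)) g" and "recursive n B"
  shows "recursive n (\<lambda>xs. prim_rec f g (B xs) xs)"
  using recursive_Cons_arg[OF recursive_prim_rec[OF assms(1,2)] assms(3)] by simp

lemma recursive_binop_prim_rec:
  assumes "recursive 1 f" and "recursive 3 g" and "\<And>k y. prim_rec f g k [y] = h k y"
  shows "recursive 2 (\<lambda>xs. h (xs ! 0) (xs ! 1))"
proof -
  have "recursive (Suc 1) (\<lambda>xs. prim_rec f g (hd xs) (tl xs))"
    by (rule recursive_prim_rec) (use assms in \<open>simp_all add: numeral_3_eq_3\<close>)
  then have "recursive 2 (\<lambda>xs. prim_rec f g (hd xs) (tl xs))"
    by (simp add: numeral_2_eq_2)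
  then show ?thesis
    by (rule recursive_cong) (use assms(3) in \<open>auto simp: numeral_2_eq_2 length_Suc_conv\<close>)
qed

lemma recursive_binop_swap:
  "recursive 2 (\<lambda>xs. h (xs ! 0) (xs ! 1)) \<Longrightarrow> recursive 2 (\<lambda>xs. h (xs ! 1) (xs ! 0))"
  by (rule recursive_comp2) (auto intro: recursive_nth)

lemma recursive_Suc: "recursive n F \<Longrightarrow> recursive n (\<lambda>xs. Suc (F xs))"
proof -
  have "eval Succ xs (Suc (xs ! 0))" if "length xs = 1" for xs
    using that by (cases xs) (auto intro: eval_Succ)
  then have "recursive 1 (\<lambda>xs. Suc (xs ! 0))" unfolding recursive_def by blast
  then show "recursive n F \<Longrightarrow> recursive n (\<lambda>xs. Suc (F xs))" by (rule recursive_comp1)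
qed

lemma recursive_add: "recursive n F \<Longrightarrow> recursive n G \<Longrightarrow> recursive n (\<lambda>xs. F xs + G xs)"
proof -
  have "recursive 2 (\<lambda>xs. xs ! 0 + xs ! 1)"
  proof (rule recursive_binop_prim_rec[where f="\<lambda>ys. ys ! 0" and g="\<lambda>zs. Suc (zs ! 0)"])
    show "prim_rec (\<lambda>ys. ys ! 0) (\<lambda>zs. Suc (zs ! 0)) k [y] = k + y" for k y
      by (induction k) auto
  qed (intro recursive_nth recursive_Suc; simp)+
  then show "recursive n F \<Longrightarrow> recursive n G \<Longrightarrow> recursive n (\<lambda>xs. F xs + G xs)"
    by (rule recursive_comp2)
qed

lemma recursive_mult: "recursive n F \<Longrightarrow> recursive n G \<Longrightarrow> recursive n (\<lambda>xs. F xs * G xs)"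
proof -
  have "recursive 2 (\<lambda>xs. xs ! 0 * xs ! 1)"
  proof (rule recursive_binop_prim_rec[where f="\<lambda>_. 0" and g="\<lambda>zs. zs ! 0 + zs ! 2"])
    show "prim_rec (\<lambda>_. 0) (\<lambda>zs. zs ! 0 + zs ! 2) k [y] = k * y" for k y
      by (induction k) auto
  qed (intro recursive_const recursive_add recursive_nth; simp)+
  then show "recursive n F \<Longrightarrow> recursive n G \<Longrightarrow> recursive n (\<lambda>xs. F xs * G xs)"
    by (rule recursive_comp2)
qed

lemma recursive_pred: "recursive n F \<Longrightarrow> recursive n (\<lambda>xs. F xs - 1)"
proof -
  have "recursive (Suc 0) (\<lambda>xs. prim_rec (\<lambda>_. 0) (\<lambda>zs. zs ! 1) (hd xs) (tl xs))"
    by (rule recursive_prim_rec) (intro recursive_const recursive_nth; simp)+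
  moreover have "prim_rec (\<lambda>_. 0) (\<lambda>zs. zs ! 1) k ys = k - 1" for k ys
    by (cases k) auto
  ultimately have "recursive 1 (\<lambda>xs. xs ! 0 - 1)"
    by (auto elim!: recursive_cong simp: length_Suc_conv)
  then show "recursive n F \<Longrightarrow> recursive n (\<lambda>xs. F xs - 1)"
    by (rule recursive_comp1)
qed

lemma recursive_diff: "recursive n F \<Longrightarrow> recursive n G \<Longrightarrow> recursive n (\<lambda>xs. F xs - G xs)"
proof -
  have "recursive 2 (\<lambda>xs. xs ! 1 - xs ! 0)"
  proof (rule recursive_binop_prim_rec[where f="\<lambda>ys. ys ! 0" and g="\<lambda>zs. zs ! 0 - 1"])
    show "prim_rec (\<lambda>ys. ys ! 0) (\<lambda>zs. zs ! 0 - 1) k [y] = y - k" for k y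
      by (induction k) auto
  qed (intro recursive_nth recursive_pred; simp)+
  then show "recursive n F \<Longrightarrow> recursive n G \<Longrightarrow> recursive n (\<lambda>xs. F xs - G xs)"
    by (rule recursive_comp2[OF recursive_binop_swap])
qed

lemma recursive_power: "recursive n F \<Longrightarrow> recursive n G \<Longrightarrow> recursive n (\<lambda>xs. F xs ^ G xs)"
proof -
  have "recursive 2 (\<lambda>xs. xs ! 1 ^ xs ! 0)"
  proof (rule recursive_binop_prim_rec[where f="\<lambda>_. 1" and g="\<lambda>zs. zs ! 0 * zs ! 2"])
    show "prim_rec (\<lambda>_. 1) (\<lambda>zs. zs ! 0 * zs ! 2) k [y] = y ^ k" for k y
      by (induction k) auto
  qed (intro recursive_const recursive_mult recursive_nth; simp)+
  then show "recursive n F \<Longrightarrow> recursive n G \<Longrightarrow> recursive n (\<lambda>xs. F xs ^ G xs)"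
    by (rule recursive_comp2[OF recursive_binop_swap])
qed

lemma recursive_triangle: "recursive n F \<Longrightarrow> recursive n (\<lambda>xs. triangle (F xs))"
proof -
  have "recursive (Suc 0) (\<lambda>xs. prim_rec (\<lambda>_. 0) (\<lambda>zs. zs ! 0 + Suc (zs ! 1)) (hd xs) (tl xs))"
    by (rule recursive_prim_rec)
      (intro recursive_const recursive_add recursive_Suc recursive_nth; simp)+
  moreover have "prim_rec (\<lambda>_. 0) (\<lambda>zs. zs ! 0 + Suc (zs ! 1)) k ys = triangle k" for k ys
    by (induction k) auto
  ultimately have "recursive 1 (\<lambda>xs. triangle (xs ! 0))"
    by (auto elim!: recursive_cong simp: length_Suc_conv)
  then show "recursive n F \<Longrightarrow> recursive n (\<lambda>xs. triangle (F xs))"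
    by (rule recursive_comp1)
qed

lemma recursive_prod_encode:
  "recursive n F \<Longrightarrow> recursive n G \<Longrightarrow> recursive n (\<lambda>xs. prod_encode (F xs, G xs))"
  unfolding prod_encode_def by (simp, intro recursive_add recursive_triangle)

lemma decidable_eq: "recursive n F \<Longrightarrow> recursive n G \<Longrightarrow> decidable n (\<lambda>xs. F xs = G xs)"
  unfolding decidable_def
  by (rule recursive_cong[where f="\<lambda>xs. 1 - ((F xs - G xs) + (G xs - F xs))"])
    (intro recursive_diff recursive_add recursive_const; assumption | simp)+

lemma decidable_less: "recursive n F \<Longrightarrow> recursive n G \<Longrightarrow> decidable n (\<lambda>xs. F xs < G xs)"
  unfolding decidable_def
  by (rule recursive_cong[where f="\<lambda>xs. 1 - (1 - (G xs - F xs))"])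
    (intro recursive_diff recursive_const; assumption | simp)+

lemma decidable_le: "recursive n F \<Longrightarrow> recursive n G \<Longrightarrow> decidable n (\<lambda>xs. F xs \<le> G xs)"
  by (rule decidable_cong[where P="\<lambda>xs. F xs < Suc (G xs)"])
    (intro decidable_less recursive_Suc; assumption | simp add: less_Suc_eq_le)+

lemma decidable_not: "decidable n P \<Longrightarrow> decidable n (\<lambda>xs. \<not> P xs)"
  unfolding decidable_def
  by (rule recursive_cong[where f="\<lambda>xs. 1 - (if P xs then 1 else 0)"])
    (intro recursive_diff recursive_const; assumption | simp)+

lemma decidable_conj: "decidable n P \<Longrightarrow> decidable n Q \<Longrightarrow> decidable n (\<lambda>xs. P xs \<and> Q xs)"
  unfolding decidable_def
  by (rule recursive_cong[where f="\<lambda>xs. (if P xs then 1 else 0) * (if Q xs then 1 else 0)"])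
    (intro recursive_mult; assumption | simp)+

lemma decidable_disj: "decidable n P \<Longrightarrow> decidable n Q \<Longrightarrow> decidable n (\<lambda>xs. P xs \<or> Q xs)"
  by (rule decidable_cong[where P="\<lambda>xs. \<not> (\<not> P xs \<and> \<not> Q xs)"])
    (intro decidable_not decidable_conj; assumption | simp)+

lemma recursive_If:
  "decidable n P \<Longrightarrow> recursive n F \<Longrightarrow> recursive n G \<Longrightarrow> recursive n (\<lambda>xs. if P xs then F xs else G xs)"
  unfolding decidable_def
  by (rule recursive_cong[where
        f="\<lambda>xs. (if P xs then 1 else 0) * F xs + (1 - (if P xs then 1 else 0)) * G xs"])
    (intro recursive_add recursive_mult recursive_diff recursive_const; assumption | simp)+

text \<open>
  In the bounded operators below, the bound variable is passed to \<open>P\<close> as a new first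
  argument: \<open>P\<close> is decidable as a function of \<open>k # xs\<close>.
\<close>

lemma decidable_ball:
  assumes "decidable (Suc n) (\<lambda>ys. P (ys ! 0) (tl ys))" and "recursive n B"
  shows "decidable n (\<lambda>xs. \<forall>k<B xs. P k xs)"
proof -
  let ?g = "\<lambda>zs. zs ! 0 * (if P (tl zs ! 0) (tl (tl zs)) then 1 else 0)"
  have "recursive n (\<lambda>xs. prim_rec (\<lambda>_. 1) ?g (B xs) xs)"
    by (intro recursive_prim_rec_Cons_arg recursive_const recursive_mult recursive_nth assms(2)
        recursive_tl_arg assms(1)[unfolded decidable_def]) simp
  moreover have "prim_rec (\<lambda>_. 1) ?g k xs = (if \<forall>j<k. P j xs then 1 else 0)" for k xs
    by (induction k) (auto simp: less_Suc_eq)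
  ultimately show ?thesis unfolding decidable_def by simp
qed

lemma decidable_bex:
  assumes "decidable (Suc n) (\<lambda>ys. P (ys ! 0) (tl ys))" and "recursive n B"
  shows "decidable n (\<lambda>xs. \<exists>k<B xs. P k xs)"
proof -
  have "decidable n (\<lambda>xs. \<not> (\<forall>k<B xs. \<not> P k xs))"
    by (intro decidable_not decidable_ball[where P="\<lambda>k xs. \<not> P k xs"] assms)
  then show ?thesis by simp
qed

definition bounded_least :: "nat \<Rightarrow> (nat \<Rightarrow> bool) \<Rightarrow> nat" where
  "bounded_least b P = (if \<exists>k<b. P k then (LEAST k. P k) else b)"

lemma bounded_least_Suc:
  "bounded_least (Suc b) P =
    (if bounded_least b P < b then bounded_least b P else if P b then b else Suc b)"
proof (cases "\<exists>k<b. P k")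
  case True
  then obtain k where "k < b" "P k" by auto
  moreover from \<open>P k\<close> have "(LEAST k. P k) \<le> k" by (rule Least_le)
  ultimately show ?thesis using True unfolding bounded_least_def by (auto simp: less_Suc_eq)
next
  case False
  then show ?thesis unfolding bounded_least_def
    by (auto simp: less_Suc_eq intro!: Least_equality) (meson not_le)
qed

lemma recursive_bounded_least:
  assumes "decidable (Suc n) (\<lambda>ys. P (ys ! 0) (tl ys))" and "recursive n B"
  shows "recursive n (\<lambda>xs. bounded_least (B xs) (\<lambda>k. P k xs))"
proof -
  let ?g = "\<lambda>zs. if zs ! 0 < zs ! 1 then zs ! 0
    else if P (zs ! 1) (tl (tl zs)) then zs ! 1 else Suc (zs ! 1)"
  have P: "decidable (Suc (Suc n)) (\<lambda>zs. P (zs ! 1) (tl (tl zs)))"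
    using recursive_tl_arg[OF assms(1)[unfolded decidable_def]] unfolding decidable_def
    by (rule recursive_cong) (simp add: nth_tl)
  have "recursive n (\<lambda>xs. prim_rec (\<lambda>_. 0) ?g (B xs) xs)"
    by (intro recursive_prim_rec_Cons_arg recursive_const recursive_If decidable_less recursive_nth
        recursive_Suc P assms(2)) auto
  moreover have "prim_rec (\<lambda>_. 0) ?g k xs = bounded_least k (\<lambda>k. P k xs)" for k xs
    by (induction k) (simp_all add: bounded_least_Suc bounded_least_def[of 0])
  ultimately show ?thesis by simp
qed

lemma recursive_funpow:
  assumes "recursive (Suc n) (\<lambda>ys. F (ys ! 0) (tl ys))" and "recursive n B" and "recursive n X"
  shows "recursive n (\<lambda>xs. ((\<lambda>v. F v xs) ^^ B xs) (X xs))"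
proof -
  let ?g = "\<lambda>zs. F (zs ! 0) (tl (tl zs))"
  let ?Fs = "(\<lambda>zs. zs ! 0) # map (\<lambda>i zs. zs ! Suc (Suc i)) [0..<n]"
  have "recursive (Suc (Suc n)) (\<lambda>zs. (\<lambda>ys. F (ys ! 0) (tl ys)) (map (\<lambda>G. G zs) ?Fs))"
    by (rule recursive_comp) (use assms(1) in \<open>auto intro: recursive_nth\<close>)
  then have "recursive (Suc (Suc n)) ?g"
  proof (rule recursive_cong)
    fix zs :: "nat list"
    assume "length zs = Suc (Suc n)"
    then have "map (\<lambda>i. zs ! Suc (Suc i)) [0..<n] = tl (tl zs)"
      by (auto simp: nth_tl intro!: nth_equalityI)
    then show "(\<lambda>ys. F (ys ! 0) (tl ys)) (map (\<lambda>G. G zs) ?Fs) = ?g zs"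
      by (simp add: comp_def)
  qed
  then have "recursive n (\<lambda>xs. prim_rec X ?g (B xs) xs)"
    by (rule recursive_prim_rec_Cons_arg[OF assms(3) _ assms(2)])
  moreover have "prim_rec X ?g k xs = ((\<lambda>v. F v xs) ^^ k) (X xs)" for k xs
    by (induction k) auto
  ultimately show ?thesis by simp
qed

lemmas recursive_intros = recursive_const recursive_nth recursive_nth_tl recursive_Suc recursive_add
  recursive_mult recursive_diff recursive_power recursive_If recursive_bounded_least
  decidable_eq decidable_less decidable_le decidable_not decidable_conj decidable_disj
  decidable_ball decidable_bex

section \<open>Coding pairs, lists and recursive terms\<close>

definition unpair1 :: "nat \<Rightarrow> nat" where "unpair1 c = fst (prod_decode c)"
definition unpair2 :: "nat \<Rightarrow> nat" where "unpair2 c = snd (prod_decode c)"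

lemma unpair1_prod_encode [simp]: "unpair1 (prod_encode (a, b)) = a"
  by (simp add: unpair1_def)

lemma unpair2_prod_encode [simp]: "unpair2 (prod_encode (a, b)) = b"
  by (simp add: unpair2_def)

lemma prod_encode_unpair [simp]: "prod_encode (unpair1 c, unpair2 c) = c"
  by (simp add: unpair1_def unpair2_def)

lemma unpair_le: "unpair1 c \<le> c" "unpair2 c \<le> c"
  using le_prod_encode_1[of "unpair1 c" "unpair2 c"] le_prod_encode_2[of "unpair2 c" "unpair1 c"]
  by simp_all

lemma unpair2_less: "0 < unpair1 c \<Longrightarrow> unpair2 c < c"
proof -
  assume "0 < unpair1 c"
  have "n \<le> triangle n" for n
    by (induction n) auto
  then have "unpair1 c + unpair2 c \<le> triangle (unpair1 c + unpair2 c)" .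
  moreover have "c = triangle (unpair1 c + unpair2 c) + unpair1 c"
    using prod_encode_unpair[of c] by (simp add: prod_encode_def)
  ultimately show ?thesis using \<open>0 < unpair1 c\<close> by linarith
qed

lemma unpair1_eq_bounded_least:
  "unpair1 c = bounded_least (Suc c) (\<lambda>a. \<exists>b<Suc c. prod_encode (a, b) = c)"
proof -
  have "(LEAST a. \<exists>b<Suc c. prod_encode (a, b) = c) = unpair1 c"
    by (rule Least_equality) (use unpair_le[of c] in \<open>auto intro!: exI[of _ "unpair2 c"]\<close>)
  moreover have "\<exists>a<Suc c. \<exists>b<Suc c. prod_encode (a, b) = c"
    using unpair_le[of c] prod_encode_unpair[of c] by (metis le_imp_less_Suc)
  ultimately show ?thesis
    unfolding bounded_least_def by simp
qed

lemma unpair2_eq_bounded_least: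
  "unpair2 c = bounded_least (Suc c) (\<lambda>b. \<exists>a<Suc c. prod_encode (a, b) = c)"
proof -
  have "(LEAST b. \<exists>a<Suc c. prod_encode (a, b) = c) = unpair2 c"
    by (rule Least_equality) (use unpair_le[of c] in \<open>auto intro!: exI[of _ "unpair1 c"]\<close>)
  moreover have "\<exists>b<Suc c. \<exists>a<Suc c. prod_encode (a, b) = c"
    using unpair_le[of c] prod_encode_unpair[of c] by (metis le_imp_less_Suc)
  ultimately show ?thesis
    unfolding bounded_least_def by simp
qed

lemma recursive_unpair1: "recursive n F \<Longrightarrow> recursive n (\<lambda>xs. unpair1 (F xs))"
proof -
  have "recursive 1 (\<lambda>xs. bounded_least (Suc (xs ! 0)) (\<lambda>a. \<exists>b<Suc (xs ! 0). prod_encode (a, b) = xs ! 0))"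
    by (intro recursive_intros recursive_prod_encode; simp)
  then have "recursive 1 (\<lambda>xs. unpair1 (xs ! 0))"
    by (simp only: unpair1_eq_bounded_least unpair2_eq_bounded_least)
  then show "recursive n F \<Longrightarrow> recursive n (\<lambda>xs. unpair1 (F xs))"
    by (rule recursive_comp1)
qed

lemma recursive_unpair2: "recursive n F \<Longrightarrow> recursive n (\<lambda>xs. unpair2 (F xs))"
proof -
  have "recursive 1 (\<lambda>xs. bounded_least (Suc (xs ! 0)) (\<lambda>b. \<exists>a<Suc (xs ! 0). prod_encode (a, b) = xs ! 0))"
    by (intro recursive_intros recursive_prod_encode; simp)
  then have "recursive 1 (\<lambda>xs. unpair2 (xs ! 0))"
    by (simp only: unpair1_eq_bounded_least unpair2_eq_bounded_least)
  then show "recursive n F \<Longrightarrow> recursive n (\<lambda>xs. unpair2 (F xs))"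
    by (rule recursive_comp1)
qed

text \<open>
  Operations on codes of lists under \<^const>\<open>list_encode\<close>, written arithmetically so that
  they are visibly recursive.
\<close>

definition enc_hd :: "nat \<Rightarrow> nat" where "enc_hd c = unpair1 (c - 1)"
definition enc_tl :: "nat \<Rightarrow> nat" where "enc_tl c = unpair2 (c - 1)"
definition enc_nth :: "nat \<Rightarrow> nat \<Rightarrow> nat" where "enc_nth c i = enc_hd ((enc_tl ^^ i) c)"
definition enc_length :: "nat \<Rightarrow> nat" where
  "enc_length c = bounded_least (Suc c) (\<lambda>i. (enc_tl ^^ i) c = 0)"
definition enc_Cons :: "nat \<Rightarrow> nat \<Rightarrow> nat" where "enc_Cons a c = Suc (prod_encode (a, c))"

lemma enc_hd_Suc_prod_encode [simp]: "enc_hd (Suc (prod_encode (a, c))) = a"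
  by (simp add: enc_hd_def)

lemma enc_tl_Suc_prod_encode [simp]: "enc_tl (Suc (prod_encode (a, c))) = c"
  by (simp add: enc_tl_def)

lemma recursive_enc_hd: "recursive n F \<Longrightarrow> recursive n (\<lambda>xs. enc_hd (F xs))"
  unfolding enc_hd_def by (intro recursive_unpair1 recursive_intros)

lemma recursive_enc_tl: "recursive n F \<Longrightarrow> recursive n (\<lambda>xs. enc_tl (F xs))"
  unfolding enc_tl_def by (intro recursive_unpair2 recursive_intros)

lemma recursive_enc_Cons:
  "recursive n F \<Longrightarrow> recursive n G \<Longrightarrow> recursive n (\<lambda>xs. enc_Cons (F xs) (G xs))"
  unfolding enc_Cons_def by (intro recursive_Suc recursive_prod_encode)

lemma recursive_funpow_enc_tl:
  "recursive n I \<Longrightarrow> recursive n C \<Longrightarrow> recursive n (\<lambda>xs. (enc_tl ^^ I xs) (C xs))"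
  using recursive_funpow[where F="\<lambda>v xs. enc_tl v" and B=I and X=C]
  by (simp add: recursive_enc_tl recursive_nth)

lemma recursive_enc_nth:
  "recursive n C \<Longrightarrow> recursive n I \<Longrightarrow> recursive n (\<lambda>xs. enc_nth (C xs) (I xs))"
  unfolding enc_nth_def by (intro recursive_enc_hd recursive_funpow_enc_tl)

lemma recursive_enc_length: "recursive n C \<Longrightarrow> recursive n (\<lambda>xs. enc_length (C xs))"
  unfolding enc_length_def
  by (intro recursive_bounded_least recursive_Suc decidable_eq recursive_funpow_enc_tl
      recursive_const recursive_nth recursive_tl_arg) auto

lemma enc_tl_list_encode: "enc_tl (list_encode xs) = list_encode (tl xs)"
proof -
  have "unpair2 0 = 0"
    using unpair2_prod_encode[of 0 0] by (simp add: prod_encode_def)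
  then show ?thesis by (cases xs) (simp_all add: enc_tl_def)
qed

lemma funpow_enc_tl_list_encode: "(enc_tl ^^ i) (list_encode xs) = list_encode (drop i xs)"
  by (induction i arbitrary: xs) (auto simp: enc_tl_list_encode drop_Suc funpow_swap1 drop_tl)

lemma enc_nth_list_encode: "i < length xs \<Longrightarrow> enc_nth (list_encode xs) i = xs ! i"
  unfolding enc_nth_def funpow_enc_tl_list_encode
  by (simp add: Cons_nth_drop_Suc[symmetric] enc_hd_def)

lemma length_le_list_encode: "length xs \<le> list_encode xs"
  by (induction xs) (auto intro: le_trans[OF _ le_prod_encode_2])

lemma enc_length_list_encode: "enc_length (list_encode xs) = length xs"
proof -
  have "list_encode xs = 0 \<longleftrightarrow> xs = []" for xs
    by (cases xs) auto
  then have "(LEAST i. list_encode (drop i xs) = 0) = length xs"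
    by (intro Least_equality) auto
  then show ?thesis
    unfolding enc_length_def funpow_enc_tl_list_encode bounded_least_def using length_le_list_encode[of xs]
    by (auto simp: \<open>\<And>xs. list_encode xs = 0 \<longleftrightarrow> xs = []\<close> intro!: exI[of _ "length xs"])
qed

lemma enc_length_eq: "enc_length c = length (list_decode c)"
  by (metis list_decode_inverse enc_length_list_encode)

lemma enc_nth_eq: "i < length (list_decode c) \<Longrightarrow> enc_nth c i = list_decode c ! i"
  by (metis list_decode_inverse enc_nth_list_encode)

lemma enc_Cons_eq: "enc_Cons a c = list_encode (a # list_decode c)"
  by (simp add: enc_Cons_def)

lemma list_decode_enc_Cons [simp]: "list_decode (enc_Cons a c) = a # list_decode c"
  by (simp add: enc_Cons_eq)

lemma list_decode_nonzero: "c \<noteq> 0 \<Longrightarrow> list_decode c = enc_hd c # list_decode (enc_tl c)"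
  by (cases c) (simp_all add: enc_hd_def enc_tl_def unpair1_def unpair2_def split: prod.split)

lemma mem_less_list_encode: "x \<in> set xs \<Longrightarrow> x < list_encode xs"
proof (induction xs)
  case (Cons a xs)
  then show ?case
    using le_prod_encode_1[of a "list_encode xs"] le_prod_encode_2[of "list_encode xs" a] by auto
qed simp

primrec recf_encode :: "recf \<Rightarrow> nat" where
  "recf_encode Zero = prod_encode (0, 0)"
| "recf_encode Succ = prod_encode (1, 0)"
| "recf_encode (Proj i) = prod_encode (2, i)"
| "recf_encode (Comp f gs) =
     prod_encode (3, prod_encode (recf_encode f, list_encode (map recf_encode gs)))"
| "recf_encode (Prim f g) = prod_encode (4, prod_encode (recf_encode f, recf_encode g))"
| "recf_encode (Mn f) = prod_encode (5, recf_encode f)"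

function recf_decode :: "nat \<Rightarrow> recf" where
  "recf_decode c =
    (if unpair1 c = 0 then Zero
     else if unpair1 c = 1 then Succ
     else if unpair1 c = 2 then Proj (unpair2 c)
     else if unpair1 c = 3 then
       Comp (recf_decode (unpair1 (unpair2 c))) (map recf_decode (list_decode (unpair2 (unpair2 c))))
     else if unpair1 c = 4 then Prim (recf_decode (unpair1 (unpair2 c))) (recf_decode (unpair2 (unpair2 c)))
     else if unpair1 c = 5 then Mn (recf_decode (unpair2 c))
     else Zero)"
  by auto
termination
proof (relation "Wellfounded.measure id")
  fix c x
  assume "unpair1 c \<noteq> 0" and "x \<in> set (list_decode (unpair2 (unpair2 c)))"
  then show "(x, c) \<in> Wellfounded.measure id"
    using unpair2_less[of c] unpair_le(2)[of "unpair2 c"] mem_less_list_encode[of x "list_decode _"]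
    by fastforce
qed (simp_all add: unpair2_less le_less_trans[OF unpair_le(1) unpair2_less]
    le_less_trans[OF unpair_le(2) unpair2_less])

declare recf_decode.simps [simp del]

lemma recf_decode_encode [simp]: "recf_decode (recf_encode r) = r"
proof (induction r)
  case (Comp f gs)
  then show ?case by (subst recf_decode.simps) (simp add: map_idI)
qed (subst recf_decode.simps; simp)+

lemma recf_decode_cases:
  "unpair1 c = 0 \<Longrightarrow> recf_decode c = Zero"
  "unpair1 c = 1 \<Longrightarrow> recf_decode c = Succ"
  "unpair1 c = 2 \<Longrightarrow> recf_decode c = Proj (unpair2 c)"
  "unpair1 c = 3 \<Longrightarrow> recf_decode c =
     Comp (recf_decode (unpair1 (unpair2 c))) (map recf_decode (list_decode (unpair2 (unpair2 c))))"
  "unpair1 c = 4 \<Longrightarrow>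
     recf_decode c = Prim (recf_decode (unpair1 (unpair2 c))) (recf_decode (unpair2 (unpair2 c)))"
  "unpair1 c = 5 \<Longrightarrow> recf_decode c = Mn (recf_decode (unpair2 c))"
  by (subst recf_decode.simps; simp)+

section \<open>Halting computations as checkable tables\<close>

text \<open>
  An entry \<open>entry c x y w\<close> claims that the term with code \<open>c\<close> maps the argument list with
  code \<open>x\<close> to \<open>y\<close>; \<open>w\<close> is a witness: the coded list of inner values of a composition, or
  the previous value of a primitive recursion.
\<close>

definition entry :: "nat \<Rightarrow> nat \<Rightarrow> nat \<Rightarrow> nat \<Rightarrow> nat" where
  "entry c x y w = prod_encode (c, prod_encode (x, prod_encode (y, w)))"

definition entry_prog :: "nat \<Rightarrow> nat" where "entry_prog e = unpair1 e"
definition entry_arg :: "nat \<Rightarrow> nat" where "entry_arg e = unpair1 (unpair2 e)"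
definition entry_val :: "nat \<Rightarrow> nat" where "entry_val e = unpair1 (unpair2 (unpair2 e))"
definition entry_aux :: "nat \<Rightarrow> nat" where "entry_aux e = unpair2 (unpair2 (unpair2 e))"

lemma entry_simps [simp]:
  "entry_prog (entry c x y w) = c" "entry_arg (entry c x y w) = x"
  "entry_val (entry c x y w) = y" "entry_aux (entry c x y w) = w"
  by (simp_all add: entry_def entry_prog_def entry_arg_def entry_val_def entry_aux_def)

definition derived_before :: "(nat \<Rightarrow> nat) \<Rightarrow> nat \<Rightarrow> nat \<Rightarrow> nat \<Rightarrow> nat \<Rightarrow> bool" where
  "derived_before ent i c x y \<longleftrightarrow>
     (\<exists>j<i. entry_prog (ent j) = c \<and> entry_arg (ent j) = x \<and> entry_val (ent j) = y)"

definition derived_pos_before :: "(nat \<Rightarrow> nat) \<Rightarrow> nat \<Rightarrow> nat \<Rightarrow> nat \<Rightarrow> bool" where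
  "derived_pos_before ent i c x \<longleftrightarrow>
     (\<exists>j<i. entry_prog (ent j) = c \<and> entry_arg (ent j) = x \<and> entry_val (ent j) \<noteq> 0)"

text \<open>One disjunct per rule of \<^const>\<open>eval\<close>, read off the code of the term (see \<^const>\<open>recf_decode\<close>).\<close>

definition justified_by :: "(nat \<Rightarrow> nat) \<Rightarrow> nat \<Rightarrow> nat \<Rightarrow> nat \<Rightarrow> nat \<Rightarrow> nat \<Rightarrow> bool" where
  "justified_by ent i c x y w \<longleftrightarrow>
    (unpair1 c = 0 \<and> y = 0) \<or>
    (unpair1 c = 1 \<and> x \<noteq> 0 \<and> y = Suc (enc_hd x)) \<or>
    (unpair1 c = 2 \<and> unpair2 c < enc_length x \<and> y = enc_nth x (unpair2 c)) \<or>
    (unpair1 c = 3 \<and> enc_length w = enc_length (unpair2 (unpair2 c)) \<and>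
       (\<forall>k<enc_length (unpair2 (unpair2 c)).
          derived_before ent i (enc_nth (unpair2 (unpair2 c)) k) x (enc_nth w k)) \<and>
       derived_before ent i (unpair1 (unpair2 c)) w y) \<or>
    (unpair1 c = 4 \<and> x \<noteq> 0 \<and> enc_hd x = 0 \<and> derived_before ent i (unpair1 (unpair2 c)) (enc_tl x) y) \<or>
    (unpair1 c = 4 \<and> x \<noteq> 0 \<and> enc_hd x \<noteq> 0 \<and>
       derived_before ent i c (enc_Cons (enc_hd x - 1) (enc_tl x)) w \<and>
       derived_before ent i (unpair2 (unpair2 c)) (enc_Cons w (enc_Cons (enc_hd x - 1) (enc_tl x))) y) \<or>
    (unpair1 c = 5 \<and> derived_before ent i (unpair2 c) (enc_Cons y x) 0 \<and>
       (\<forall>k<y. derived_pos_before ent i (unpair2 c) (enc_Cons k x)))"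

definition justified :: "(nat \<Rightarrow> nat) \<Rightarrow> nat \<Rightarrow> bool" where
  "justified ent i \<longleftrightarrow>
     justified_by ent i (entry_prog (ent i)) (entry_arg (ent i)) (entry_val (ent i)) (entry_aux (ent i))"

definition valid_trace :: "nat \<Rightarrow> bool" where
  "valid_trace t \<longleftrightarrow> (\<forall>i<enc_length t. justified (enc_nth t) i)"

definition halting_trace :: "nat \<Rightarrow> nat \<Rightarrow> bool" where
  "halting_trace e t \<longleftrightarrow> valid_trace t \<and>
     (\<exists>i<enc_length t. entry_prog (enc_nth t i) = e \<and> entry_arg (enc_nth t i) = enc_Cons e 0)"

lemma decidable_halting_trace:
  assumes "recursive n E" and "recursive n T"
  shows "decidable n (\<lambda>xs. halting_trace (E xs) (T xs))"
proof -
  note entry_intros = recursive_unpair1 recursive_unpair2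
    recursive_enc_nth recursive_enc_length recursive_enc_hd recursive_enc_tl recursive_enc_Cons
  have "decidable 2 (\<lambda>xs. halting_trace (xs ! 0) (xs ! 1))"
    unfolding halting_trace_def valid_trace_def justified_def justified_by_def derived_before_def
      derived_pos_before_def entry_prog_def entry_arg_def entry_val_def entry_aux_def
    by (intro recursive_intros entry_intros; simp)
  then show ?thesis
    unfolding decidable_def using assms by (rule recursive_comp2)
qed

definition valid_entries :: "nat list \<Rightarrow> bool" where
  "valid_entries L \<longleftrightarrow> (\<forall>i<length L. justified ((!) L) i)"

definition has_entry :: "nat list \<Rightarrow> nat \<Rightarrow> nat \<Rightarrow> nat \<Rightarrow> bool" where
  "has_entry L c x y \<longleftrightarrow> (\<exists>e\<in>set L. entry_prog e = c \<and> entry_arg e = x \<and> entry_val e = y)"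

lemma has_entry_append [simp]:
  "has_entry (L @ M) c x y \<longleftrightarrow> has_entry L c x y \<or> has_entry M c x y"
  unfolding has_entry_def by auto

lemma derived_before_nth_length:
  "derived_before ((!) L) (length L) c x y \<longleftrightarrow> has_entry L c x y"
  unfolding derived_before_def has_entry_def by (metis in_set_conv_nth)

lemma derived_pos_before_nth_length:
  "derived_pos_before ((!) L) (length L) c x \<longleftrightarrow> (\<exists>y. 0 < y \<and> has_entry L c x y)"
  unfolding derived_pos_before_def has_entry_def by (metis in_set_conv_nth bot_nat_0.not_eq_extremum)

lemma justified_by_mono:
  assumes "justified_by ent i c x y w" and "\<forall>j<i. \<exists>j'<i'. ent' j' = ent j"
  shows "justified_by ent' i' c x y w"
proof -
  have "derived_before ent i c x y \<Longrightarrow> derived_before ent' i' c x y" for c x y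
    using assms(2) unfolding derived_before_def by metis
  moreover have "derived_pos_before ent i c x \<Longrightarrow> derived_pos_before ent' i' c x" for c x
    using assms(2) unfolding derived_pos_before_def by metis
  ultimately show ?thesis
    using assms(1) unfolding justified_by_def by (elim disjE) simp_all
qed

lemma justified_mono:
  "justified ent i \<Longrightarrow> ent' i' = ent i \<Longrightarrow> \<forall>j<i. \<exists>j'<i'. ent' j' = ent j \<Longrightarrow> justified ent' i'"
  unfolding justified_def by (rule justified_by_mono) simp_all

lemma justified_cong:
  assumes "\<And>j. j \<le> i \<Longrightarrow> ent' j = ent j"
  shows "justified ent' i \<longleftrightarrow> justified ent i"
proof -
  have "\<forall>j<i. \<exists>j'<i. ent' j' = ent j" "\<forall>j<i. \<exists>j'<i. ent j' = ent' j"
    using assms less_imp_le by metis+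
  then show ?thesis
    using justified_mono[of ent i ent' i] justified_mono[of ent' i ent i] assms[OF order_refl] by metis
qed

lemma valid_trace_iff: "valid_trace t \<longleftrightarrow> valid_entries (list_decode t)"
proof -
  have "justified (enc_nth t) i \<longleftrightarrow> justified ((!) (list_decode t)) i" if "i < enc_length t" for i
    using that by (intro justified_cong) (simp add: enc_length_eq enc_nth_eq)
  then show ?thesis
    unfolding valid_trace_def valid_entries_def by (simp add: enc_length_eq)
qed

lemma halting_trace_iff:
  "halting_trace e t \<longleftrightarrow>
     valid_entries (list_decode t) \<and> (\<exists>y. has_entry (list_decode t) e (list_encode [e]) y)"
proof -
  have ex_nth: "(\<exists>i<length xs. P (xs ! i)) \<longleftrightarrow> (\<exists>x\<in>set xs. P x)" for P and xs :: "nat list"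
    by (auto simp: in_set_conv_nth) (use nth_mem in blast)
  have "enc_Cons e 0 = list_encode [e]"
    by (simp add: enc_Cons_eq)
  moreover have "enc_nth t i = list_decode t ! i" if "i < enc_length t" for i
    using that by (simp add: enc_length_eq enc_nth_eq)
  ultimately have "(\<exists>i<enc_length t. entry_prog (enc_nth t i) = e \<and> entry_arg (enc_nth t i) = enc_Cons e 0) \<longleftrightarrow>
    (\<exists>x\<in>set (list_decode t). entry_prog x = e \<and> entry_arg x = list_encode [e])"
    unfolding ex_nth[symmetric] enc_length_eq by auto
  then show ?thesis
    unfolding halting_trace_def valid_trace_iff has_entry_def by blast
qed

lemma valid_entries_append:
  assumes "valid_entries L" and "valid_entries M"
  shows "valid_entries (L @ M)"
  unfolding valid_entries_def
proof (intro allI impI)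
  fix i
  assume i: "i < length (L @ M)"
  show "justified ((!) (L @ M)) i"
  proof (cases "i < length L")
    case True
    then have "justified ((!) (L @ M)) i \<longleftrightarrow> justified ((!) L) i"
      by (intro justified_cong) (simp add: nth_append)
    with True assms(1) show ?thesis
      unfolding valid_entries_def by simp
  next
    case False
    define j where "j = i - length L"
    have j: "i = length L + j" "j < length M"
      using i False unfolding j_def by auto
    have "justified ((!) M) j"
      using j(2) assms(2) unfolding valid_entries_def by simp
    moreover have "(L @ M) ! i = M ! j"
      using j by (simp add: nth_append)
    moreover have "\<exists>k'<i. (L @ M) ! k' = M ! k" if "k < j" for k
      using that j by (intro exI[of _ "length L + k"]) (simp add: nth_append)
    ultimately show ?thesis
      by (blast intro: justified_mono)
  qed
qed

lemma valid_entries_snoc: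
  assumes "valid_entries L" and "justified_by ((!) L) (length L) c x y w"
  shows "valid_entries (L @ [entry c x y w])"
  unfolding valid_entries_def
proof (intro allI impI)
  fix i
  assume "i < length (L @ [entry c x y w])"
  then consider "i < length L" | "i = length L" by fastforce
  then show "justified ((!) (L @ [entry c x y w])) i"
  proof cases
    case 1
    then have "justified ((!) (L @ [entry c x y w])) i \<longleftrightarrow> justified ((!) L) i"
      by (intro justified_cong) (simp add: nth_append)
    with 1 assms(1) show ?thesis
      unfolding valid_entries_def by simp
  next
    case 2
    have "\<exists>j'<length L. (L @ [entry c x y w]) ! j' = L ! j" if "j < length L" for j
      using that by (intro exI[of _ j]) (simp add: nth_append)
    then have "justified_by ((!) (L @ [entry c x y w])) (length L) c x y w"
      by (blast intro: justified_by_mono[OF assms(2)])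
    with 2 show ?thesis
      unfolding justified_def by simp
  qed
qed

definition derivable :: "nat \<Rightarrow> nat \<Rightarrow> nat \<Rightarrow> bool" where
  "derivable c x y \<longleftrightarrow> (\<exists>L. valid_entries L \<and> has_entry L c x y)"

lemma derivable_step:
  assumes "valid_entries L" and "justified_by ((!) L) (length L) c x y w"
  shows "derivable c x y"
  unfolding derivable_def
  using valid_entries_snoc[OF assms] by (force simp: has_entry_def)

lemma derivable_combine:
  fixes n :: nat
  shows "(\<forall>k<n. derivable (c k) (x k) (y k)) \<Longrightarrow>
    \<exists>L. valid_entries L \<and> (\<forall>k<n. has_entry L (c k) (x k) (y k))"
proof (induction n)
  case 0
  show ?case by (rule exI[of _ "[]"]) (simp add: valid_entries_def)
next
  case (Suc n)
  then obtain L where "valid_entries L" "\<forall>k<n. has_entry L (c k) (x k) (y k)"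
    by auto
  moreover obtain M where "valid_entries M" "has_entry M (c n) (x n) (y n)"
    using Suc.prems unfolding derivable_def by blast
  ultimately show ?case
    by (intro exI[of _ "L @ M"]) (auto simp: valid_entries_append less_Suc_eq)
qed

lemma derivable_pair:
  assumes "derivable c x y" and "derivable c' x' y'"
  obtains L where "valid_entries L" "has_entry L c x y" "has_entry L c' x' y'"
  using assms unfolding derivable_def by (metis has_entry_append valid_entries_append)

lemma derivable_Zero: "derivable (recf_encode Zero) x 0"
  by (rule derivable_step[of "[]" _ _ _ 0]) (simp_all add: valid_entries_def justified_by_def)

lemma derivable_Succ: "derivable (recf_encode Succ) (list_encode (a # xs)) (Suc a)"
  by (rule derivable_step[of "[]" _ _ _ 0]) (simp_all add: valid_entries_def justified_by_def enc_hd_def)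

lemma derivable_Proj: "i < length xs \<Longrightarrow> derivable (recf_encode (Proj i)) (list_encode xs) (xs ! i)"
  by (rule derivable_step[of "[]" _ _ _ 0])
    (simp_all add: valid_entries_def justified_by_def enc_length_list_encode enc_nth_list_encode)

lemma derivable_Comp:
  assumes "length ys = length gs" and "\<forall>k<length gs. derivable (recf_encode (gs ! k)) x (ys ! k)"
    and "derivable (recf_encode f) (list_encode ys) z"
  shows "derivable (recf_encode (Comp f gs)) x z"
proof -
  obtain L where L: "valid_entries L" "\<forall>k<length gs. has_entry L (recf_encode (gs ! k)) x (ys ! k)"
    using derivable_combine[OF assms(2)] by blast
  obtain M where M: "valid_entries M" "has_entry M (recf_encode f) (list_encode ys) z"
    using assms(3) unfolding derivable_def by blast
  show ?thesis
  proof (rule derivable_step[of "L @ M" _ _ _ "list_encode ys"])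
    show "valid_entries (L @ M)"
      using L(1) M(1) by (rule valid_entries_append)
    show "justified_by ((!) (L @ M)) (length (L @ M)) (recf_encode (Comp f gs)) x z (list_encode ys)"
      unfolding justified_by_def derived_before_nth_length
      using L(2) M(2) assms(1) by (simp add: enc_length_list_encode enc_nth_list_encode)
  qed
qed

lemma derivable_Prim0:
  assumes "derivable (recf_encode f) (list_encode xs) y"
  shows "derivable (recf_encode (Prim f g)) (list_encode (0 # xs)) y"
proof -
  obtain L where "valid_entries L" "has_entry L (recf_encode f) (list_encode xs) y"
    using assms unfolding derivable_def by blast
  then show ?thesis
    by (intro derivable_step[of L _ _ _ 0]) (simp_all add: justified_by_def derived_before_nth_length)
qed

lemma derivable_PrimS:
  assumes "derivable (recf_encode (Prim f g)) (list_encode (n # xs)) y"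
    and "derivable (recf_encode g) (list_encode (y # n # xs)) z"
  shows "derivable (recf_encode (Prim f g)) (list_encode (Suc n # xs)) z"
proof -
  obtain L where "valid_entries L" "has_entry L (recf_encode (Prim f g)) (list_encode (n # xs)) y"
    "has_entry L (recf_encode g) (list_encode (y # n # xs)) z"
    using assms by (rule derivable_pair)
  then show ?thesis
    by (intro derivable_step[of L _ _ _ y])
      (simp_all add: justified_by_def derived_before_nth_length enc_Cons_def)
qed

lemma derivable_Mn:
  assumes "derivable (recf_encode f) (list_encode (n # xs)) 0"
    and "\<forall>k<n. \<exists>y. 0 < y \<and> derivable (recf_encode f) (list_encode (k # xs)) y"
  shows "derivable (recf_encode (Mn f)) (list_encode xs) n"
proof -
  obtain Y where "\<forall>k<n. 0 < Y k \<and> derivable (recf_encode f) (list_encode (k # xs)) (Y k)"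
    using assms(2) by metis
  then obtain L where L: "valid_entries L"
    "\<forall>k<n. 0 < Y k \<and> has_entry L (recf_encode f) (list_encode (k # xs)) (Y k)"
    using derivable_combine[of n "\<lambda>_. recf_encode f" "\<lambda>k. list_encode (k # xs)" Y] by auto
  obtain M where M: "valid_entries M" "has_entry M (recf_encode f) (list_encode (n # xs)) 0"
    using assms(1) unfolding derivable_def by blast
  show ?thesis
  proof (rule derivable_step[of "L @ M" _ _ _ 0])
    show "valid_entries (L @ M)"
      using L(1) M(1) by (rule valid_entries_append)
    show "justified_by ((!) (L @ M)) (length (L @ M)) (recf_encode (Mn f)) (list_encode xs) n 0"
      unfolding justified_by_def derived_before_nth_length derived_pos_before_nth_length
      using L(2) M(2) by (auto simp: enc_Cons_def)
  qed
qed

lemma eval_imp_derivable: "eval r xs y \<Longrightarrow> derivable (recf_encode r) (list_encode xs) y"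
proof (induction r xs y rule: eval.induct)
  case (eval_Comp xs gs ys f z)
  then show ?case
    by (intro derivable_Comp) (auto simp: list_all2_conv_all_nth)
qed (blast intro: derivable_Zero derivable_Succ derivable_Proj derivable_Prim0 derivable_PrimS
    derivable_Mn)+

lemma derived_pos_before_sound:
  assumes "derived_pos_before ent i c x"
    and IH: "\<And>c x y. derived_before ent i c x y \<Longrightarrow> eval (recf_decode c) (list_decode x) y"
  shows "\<exists>y. eval (recf_decode c) (list_decode x) y \<and> 0 < y"
proof -
  from assms(1) obtain j
    where "j < i" "entry_prog (ent j) = c" "entry_arg (ent j) = x" "entry_val (ent j) \<noteq> 0"
    unfolding derived_pos_before_def by blast
  then have "derived_before ent i c x (entry_val (ent j))"
    unfolding derived_before_def by blast
  then have "eval (recf_decode c) (list_decode x) (entry_val (ent j))"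
    by (rule IH)
  with \<open>entry_val (ent j) \<noteq> 0\<close> show ?thesis
    by blast
qed

lemma justified_by_sound:
  assumes "justified_by ent i c x y w"
    and IH: "\<And>c x y. derived_before ent i c x y \<Longrightarrow> eval (recf_decode c) (list_decode x) y"
  shows "eval (recf_decode c) (list_decode x) y"
  using assms(1) unfolding justified_by_def
proof (elim disjE conjE)
  assume "unpair1 c = 0" "y = 0"
  then show ?thesis by (simp add: recf_decode_cases eval_Zero)
next
  assume "unpair1 c = 1" "x \<noteq> 0" "y = Suc (enc_hd x)"
  then show ?thesis by (simp add: recf_decode_cases list_decode_nonzero eval_Succ)
next
  assume "unpair1 c = 2" "unpair2 c < enc_length x" "y = enc_nth x (unpair2 c)"
  then show ?thesis by (simp add: recf_decode_cases enc_nth_eq enc_length_eq eval_Proj)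
next
  assume c: "unpair1 c = 3" and len: "enc_length w = enc_length (unpair2 (unpair2 c))"
    and gs: "\<forall>k<enc_length (unpair2 (unpair2 c)).
      derived_before ent i (enc_nth (unpair2 (unpair2 c)) k) x (enc_nth w k)"
    and f: "derived_before ent i (unpair1 (unpair2 c)) w y"
  have "list_all2 (\<lambda>g. eval g (list_decode x)) (map recf_decode (list_decode (unpair2 (unpair2 c))))
      (list_decode w)"
    using len IH[OF gs[rule_format]] by (simp add: list_all2_conv_all_nth enc_length_eq enc_nth_eq)
  then show ?thesis
    using c IH[OF f] by (simp add: recf_decode_cases eval_Comp)
next
  assume "unpair1 c = 4" "x \<noteq> 0" "enc_hd x = 0"
    "derived_before ent i (unpair1 (unpair2 c)) (enc_tl x) y"
  then show ?thesis
    using IH by (simp add: recf_decode_cases list_decode_nonzero eval_Prim0)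
next
  assume c: "unpair1 c = 4" and x: "x \<noteq> 0" "enc_hd x \<noteq> 0"
    and prev: "derived_before ent i c (enc_Cons (enc_hd x - 1) (enc_tl x)) w"
    and step: "derived_before ent i (unpair2 (unpair2 c))
      (enc_Cons w (enc_Cons (enc_hd x - 1) (enc_tl x))) y"
  obtain n where n: "enc_hd x = Suc n"
    using x(2) not0_implies_Suc by blast
  have "eval (Prim (recf_decode (unpair1 (unpair2 c))) (recf_decode (unpair2 (unpair2 c))))
      (Suc n # list_decode (enc_tl x)) y"
    by (rule eval_PrimS) (use IH[OF prev] IH[OF step] c n in \<open>simp_all add: recf_decode_cases\<close>)
  then show ?thesis
    using c x n by (simp add: recf_decode_cases list_decode_nonzero)
next
  assume c: "unpair1 c = 5" and zero: "derived_before ent i (unpair2 c) (enc_Cons y x) 0"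
    and pos: "\<forall>k<y. derived_pos_before ent i (unpair2 c) (enc_Cons k x)"
  have "\<exists>v. eval (recf_decode (unpair2 c)) (k # list_decode x) v \<and> 0 < v" if "k < y" for k
    using derived_pos_before_sound[OF pos[rule_format, OF that] IH] by simp
  then show ?thesis
    using c IH[OF zero] by (simp add: recf_decode_cases eval_Mn)
qed

lemma valid_entries_sound:
  assumes "valid_entries L" and "i < length L"
  shows "eval (recf_decode (entry_prog (L ! i))) (list_decode (entry_arg (L ! i))) (entry_val (L ! i))"
  using assms(2)
proof (induction i rule: less_induct)
  case (less i)
  have "justified ((!) L) i"
    using assms(1) less.prems unfolding valid_entries_def by blast
  moreover have "eval (recf_decode c) (list_decode x) y" if "derived_before ((!) L) i c x y" for c x y
  proof -
    from that obtain j
      where "j < i" "entry_prog (L ! j) = c" "entry_arg (L ! j) = x" "entry_val (L ! j) = y"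
      unfolding derived_before_def by blast
    with less.IH[of j] less.prems show ?thesis by simp
  qed
  ultimately show ?case
    unfolding justified_def by (rule justified_by_sound)
qed

lemma derivable_imp_eval:
  assumes "derivable c x y"
  shows "eval (recf_decode c) (list_decode x) y"
proof -
  obtain L where L: "valid_entries L" "has_entry L c x y"
    using assms unfolding derivable_def by blast
  then obtain e where "e \<in> set L" "entry_prog e = c" "entry_arg e = x" "entry_val e = y"
    unfolding has_entry_def by blast
  moreover from \<open>e \<in> set L\<close> obtain i where "i < length L" "L ! i = e"
    by (auto simp: in_set_conv_nth)
  ultimately show ?thesis
    using valid_entries_sound[OF L(1)] by blast
qed

definition halts_on_self :: "nat \<Rightarrow> bool" where
  "halts_on_self e \<longleftrightarrow> (\<exists>t. halting_trace e t)"

lemma halts_on_self_iff_derivable: "halts_on_self e \<longleftrightarrow> (\<exists>y. derivable e (list_encode [e]) y)"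
proof
  assume "halts_on_self e"
  then show "\<exists>y. derivable e (list_encode [e]) y"
    unfolding halts_on_self_def halting_trace_iff derivable_def by blast
next
  assume "\<exists>y. derivable e (list_encode [e]) y"
  then obtain y L where "valid_entries L" "has_entry L e (list_encode [e]) y"
    unfolding derivable_def by blast
  then have "halting_trace e (list_encode L)"
    unfolding halting_trace_iff by auto
  then show "halts_on_self e"
    unfolding halts_on_self_def by blast
qed

lemma halts_on_self_recf_encode: "halts_on_self (recf_encode r) \<longleftrightarrow> (\<exists>y. eval r [recf_encode r] y)"
proof
  assume "halts_on_self (recf_encode r)"
  then obtain y where "derivable (recf_encode r) (list_encode [recf_encode r]) y"
    unfolding halts_on_self_iff_derivable by blast
  then have "eval r [recf_encode r] y"
    using derivable_imp_eval by fastforce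
  then show "\<exists>y. eval r [recf_encode r] y" ..
next
  assume "\<exists>y. eval r [recf_encode r] y"
  then show "halts_on_self (recf_encode r)"
    unfolding halts_on_self_iff_derivable by (blast dest: eval_imp_derivable)
qed

lemma halting_undecidable: "\<not> decidable 1 (\<lambda>xs. halts_on_self (xs ! 0))"
proof
  assume "decidable 1 (\<lambda>xs. halts_on_self (xs ! 0))"
  then obtain d where d: "\<And>xs. length xs = 1 \<Longrightarrow> eval d xs (if halts_on_self (xs ! 0) then 1 else 0)"
    unfolding decidable_def recursive_def by blast
  define p where "p = Comp (Mn (Proj 1)) [d]"
    \<comment> \<open>halts on its own code exactly when \<open>d\<close> answers \<open>0\<close>\<close>
  define e where "e = recf_encode p"
  have d_e: "eval d [e] (if halts_on_self e then 1 else 0)"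
    using d[of "[e]"] by simp
  have "(\<exists>y. eval p [e] y) \<longleftrightarrow> \<not> halts_on_self e"
  proof
    assume "\<exists>y. eval p [e] y"
    then obtain y v where "eval d [e] v" "eval (Mn (Proj 1)) [v] y"
      unfolding p_def by (auto elim!: eval_CompE simp: list_all2_Cons1)
    then have "v = (if halts_on_self e then 1 else 0)" "eval (Proj 1) [y, v] 0"
      using d_e eval_functional by (blast, blast elim: eval_MnE)
    moreover have "eval (Proj 1) [y, v] v"
      using eval_Proj[of 1 "[y, v]"] by simp
    ultimately show "\<not> halts_on_self e"
      using eval_functional by fastforce
  next
    assume "\<not> halts_on_self e"
    then have "eval d [e] 0"
      using d_e by simp
    moreover have "eval (Mn (Proj 1)) [0] 0"
      by (rule eval_Mn) (use eval_Proj[of 1 "[0, 0]"] in auto)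
    ultimately show "\<exists>y. eval p [e] y"
      unfolding p_def by (blast intro: eval_Comp[where ys="[0]"])
  qed
  then show False
    using halts_on_self_recf_encode[of p] unfolding e_def by blast
qed

section \<open>Computable real sequences and the halting problem\<close>

lemma recursive2_iff: "recursive2 f \<longleftrightarrow> recursive 2 (\<lambda>xs. f (xs ! 0) (xs ! 1))"
proof -
  have "length xs = 2 \<longleftrightarrow> (\<exists>n k. xs = [n, k])" for xs :: "nat list"
    by (auto simp: numeral_2_eq_2 length_Suc_conv)
  then show ?thesis
    unfolding recursive2_def recursive_def by (metis nth_Cons_0 nth_Cons_Suc One_nat_def)
qed

lemma recursive_recursive2:
  "recursive2 f \<Longrightarrow> recursive n F \<Longrightarrow> recursive n G \<Longrightarrow> recursive n (\<lambda>xs. f (F xs) (G xs))"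
  unfolding recursive2_iff by (rule recursive_comp2)

lemma decidable_even: "recursive n F \<Longrightarrow> decidable n (\<lambda>xs. even (F xs))"
proof -
  assume F: "recursive n F"
  have "decidable n (\<lambda>xs. \<exists>h<Suc (F xs). F xs = 2 * h)"
    by (intro decidable_bex decidable_eq recursive_tl_arg recursive_mult recursive_Suc
        recursive_const recursive_nth F) simp
  then show ?thesis
    by (rule decidable_cong) (auto elim!: evenE)
qed

lemma computable_real_seq_const: "computable_real_seq (\<lambda>_. real c)"
proof -
  have "recursive2 (\<lambda>n k. c)" for c
    unfolding recursive2_iff by (rule recursive_const)
  then have "computable_rat_seq2 (\<lambda>n k. of_nat c)"
    unfolding computable_rat_seq2_def
    by (intro exI[of _ "\<lambda>n k. c"] exI[of _ "\<lambda>n k. 1"] exI[of _ "\<lambda>n k. 0"]) auto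
  then show ?thesis
    unfolding computable_real_seq_def by (intro exI[of _ "\<lambda>n k. of_nat c"]) auto
qed

lemma signed_fraction_ge_half_iff:
  assumes "b \<noteq> 0"
  shows "1/2 \<le> (-1) ^ s * real a / real b \<longleftrightarrow> even s \<and> b \<le> 2 * a"
proof (cases "even s")
  case True
  have "1/2 \<le> real a / real b \<longleftrightarrow> real b \<le> 2 * real a"
    using assms by (simp add: field_simps)
  also have "\<dots> \<longleftrightarrow> b \<le> 2 * a"
    by linarith
  finally show ?thesis using True by simp
next
  case False
  then have "(-1) ^ s * real a / real b = - (real a / real b)"
    by simp
  moreover have "0 \<le> real a / real b"
    by simp
  ultimately show ?thesis
    using False by linarith
qed

text \<open>
  A computable sequence avoiding \<open>(0, 1)\<close> can be compared with \<open>1\<close> using the single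
  approximation \<open>q e 2\<close>, which lies within \<open>1/4\<close> of \<open>y e\<close>.
\<close>

lemma computable_gap_imp_decidable_one_le:
  assumes "computable_real_seq y" and gap: "\<And>e. y e \<le> 0 \<or> 1 \<le> y e"
  shows "decidable 1 (\<lambda>xs. 1 \<le> y (xs ! 0))"
proof -
  obtain q where q: "computable_rat_seq2 q" and approx: "\<And>n k. \<bar>real_of_rat (q n k) - y n\<bar> \<le> 1 / 2 ^ k"
    using assms(1) unfolding computable_real_seq_def by blast
  obtain a b s where rec: "recursive2 a" "recursive2 b" "recursive2 s"
    and qd: "\<And>n k. b n k \<noteq> 0 \<and> q n k = (-1) ^ (s n k) * of_nat (a n k) / of_nat (b n k)"
    using q unfolding computable_rat_seq2_def by blast
  have "1 \<le> y e \<longleftrightarrow> 1/2 \<le> real_of_rat (q e 2)" for e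
    using approx[of e 2] gap[of e] unfolding abs_le_iff by auto
  also have "\<dots> e \<longleftrightarrow> even (s e 2) \<and> b e 2 \<le> 2 * a e 2" for e
    using qd[of e 2] signed_fraction_ge_half_iff[of "b e 2" "s e 2" "a e 2"]
    by (simp add: of_rat_divide of_rat_mult of_rat_power)
  finally have iff: "1 \<le> y e \<longleftrightarrow> even (s e 2) \<and> b e 2 \<le> 2 * a e 2" for e .
  have "decidable 1 (\<lambda>xs. even (s (xs ! 0) 2) \<and> b (xs ! 0) 2 \<le> 2 * a (xs ! 0) 2)"
    by (intro decidable_conj decidable_even decidable_le recursive_mult recursive_recursive2[OF rec(1)]
        recursive_recursive2[OF rec(2)] recursive_recursive2[OF rec(3)] recursive_nth recursive_const)
      simp_all
  then show ?thesis
    by (rule decidable_cong) (simp add: iff)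
qed

definition halting_weight :: "nat \<Rightarrow> real" where
  "halting_weight e = (if halts_on_self e then (1/2) ^ (LEAST t. halting_trace e t) else 0)"

lemma halting_weight_nonneg: "0 \<le> halting_weight e"
  unfolding halting_weight_def by simp

lemma halting_weight_eq_0_iff: "halting_weight e = 0 \<longleftrightarrow> \<not> halts_on_self e"
  unfolding halting_weight_def by simp

lemma halting_weight_eq_0: "\<not> halts_on_self e \<Longrightarrow> halting_weight e = 0"
  unfolding halting_weight_def by simp

lemma one_le_inverse_halting_weight: "halts_on_self e \<Longrightarrow> 1 \<le> inverse (halting_weight e)"
  unfolding halting_weight_def by (simp add: power_inverse[symmetric])

lemma computable_halting_weight: "computable_real_seq halting_weight"
proof -
  define a where "a e k = (if \<exists>t<Suc k. halting_trace e t then 1 else (0::nat))" for e k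
  define b where "b e k = (2::nat) ^ bounded_least (Suc k) (halting_trace e)" for e k
  have "recursive2 a" "recursive2 b"
    unfolding recursive2_iff a_def b_def
    by (intro recursive_intros decidable_halting_trace; simp)+
  moreover have "recursive2 (\<lambda>e k. 0)"
    unfolding recursive2_iff by (rule recursive_const)
  ultimately have "computable_rat_seq2 (\<lambda>e k. of_nat (a e k) / of_nat (b e k))"
    unfolding computable_rat_seq2_def
    by (intro exI[of _ a] exI[of _ b] exI[of _ "\<lambda>e k. 0"]) (simp add: b_def)
  moreover have "\<bar>of_nat (a e k) / of_nat (b e k) - halting_weight e\<bar> \<le> 1 / 2 ^ k" for e k
  proof (cases "\<exists>t<Suc k. halting_trace e t")
    case True
    then have "bounded_least (Suc k) (halting_trace e) = (LEAST t. halting_trace e t)"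
      unfolding bounded_least_def by auto
    with True show ?thesis
      unfolding a_def b_def halting_weight_def halts_on_self_def by (auto simp: power_one_over)
  next
    case False
    then have "halts_on_self e \<Longrightarrow> Suc k \<le> (LEAST t. halting_trace e t)"
      unfolding halts_on_self_def by (meson LeastI_ex not_less)
    then have "halting_weight e \<le> (1/2) ^ k"
      unfolding halting_weight_def by (auto intro: power_decreasing)
    moreover have "a e k = 0"
      using False unfolding a_def by simp
    ultimately show ?thesis
      using halting_weight_nonneg[of e] by (simp add: power_one_over)
  qed
  ultimately show ?thesis
    unfolding computable_real_seq_def
    by (intro exI[of _ "\<lambda>e k. of_nat (a e k) / of_nat (b e k)"]) (simp add: of_rat_divide)
qed

lemma not_computable_if_separates_halting:
  assumes "\<And>e. halts_on_self e \<Longrightarrow> 1 \<le> y e" and "\<And>e. \<not> halts_on_self e \<Longrightarrow> y e \<le> 0"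
  shows "\<not> computable_real_seq y"
proof
  assume "computable_real_seq y"
  then have "decidable 1 (\<lambda>xs. 1 \<le> y (xs ! 0))"
    by (rule computable_gap_imp_decidable_one_le) (use assms in force)
  then have "decidable 1 (\<lambda>xs. halts_on_self (xs ! 0))"
    by (rule decidable_cong) (use assms in force)
  with halting_undecidable show False ..
qed

lemma not_computable_if_separates_nonhalting:
  assumes "\<And>e. halts_on_self e \<Longrightarrow> y e \<le> 0" and "\<And>e. \<not> halts_on_self e \<Longrightarrow> 1 \<le> y e"
  shows "\<not> computable_real_seq y"
proof
  assume "computable_real_seq y"
  then have "decidable 1 (\<lambda>xs. 1 \<le> y (xs ! 0))"
    by (rule computable_gap_imp_decidable_one_le) (use assms in force)
  then have "decidable 1 (\<lambda>xs. \<not> halts_on_self (xs ! 0))"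
    by (rule decidable_cong) (use assms in force)
  then have "decidable 1 (\<lambda>xs. halts_on_self (xs ! 0))"
    by (rule decidable_cong[OF decidable_not]) simp
  with halting_undecidable show False ..
qed

lemma not_computable_inverse_halting_weight: "\<not> computable_real_seq (\<lambda>e. inverse (halting_weight e))"
  by (rule not_computable_if_separates_halting)
    (simp_all add: one_le_inverse_halting_weight halting_weight_eq_0)

section \<open>The Moore-Penrose inverse of a matrix unit\<close>

lemma adjoint_cmat_mult: "adjoint_cmat (A ** B) = adjoint_cmat B ** adjoint_cmat A"
  unfolding adjoint_cmat_def matrix_matrix_mult_def
  by (simp add: vec_eq_iff mult.commute)

lemma penrose_unique:
  assumes X: "penrose A X" and Y: "penrose A Y"
  shows "X = Y"
proof -
  let ?a = adjoint_cmat
  have X1: "A ** X ** A = A" and X2: "X ** A ** X = X" and X3: "?a (A ** X) = A ** X"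
    and X4: "?a (X ** A) = X ** A"
    using X unfolding penrose_def by auto
  have Y1: "A ** Y ** A = A" and Y2: "Y ** A ** Y = Y" and Y3: "?a (A ** Y) = A ** Y"
    and Y4: "?a (Y ** A) = Y ** A"
    using Y unfolding penrose_def by auto
  have "X = X ** ?a (A ** X)"
    using X2 X3 by (simp add: matrix_mul_assoc)
  also have "\<dots> = X ** ?a (A ** Y ** A ** X)"
    using Y1 by simp
  also have "\<dots> = X ** ?a (A ** X) ** ?a (A ** Y)"
    by (simp add: adjoint_cmat_mult matrix_mul_assoc)
  also have "\<dots> = X ** A ** Y"
    using X2 X3 Y3 by (simp add: matrix_mul_assoc)
  finally have "X = X ** A ** Y" .
  have "Y = ?a (Y ** A) ** Y"
    using Y2 Y4 by simp
  also have "\<dots> = ?a (Y ** (A ** X ** A)) ** Y"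
    using X1 by simp
  also have "\<dots> = ?a (X ** A) ** ?a (Y ** A) ** Y"
    by (simp add: adjoint_cmat_mult matrix_mul_assoc)
  also have "\<dots> = X ** A ** (Y ** A ** Y)"
    using X4 Y4 by (simp add: matrix_mul_assoc)
  also have "\<dots> = X ** A ** Y"
    using Y2 by simp
  finally show "X = Y"
    using \<open>X = X ** A ** Y\<close> by simp
qed

lemma pinv_eqI: "penrose A X \<Longrightarrow> pinv A = X"
  unfolding pinv_def by (rule the_equality) (auto intro: penrose_unique)

definition matrix_unit :: "'m \<Rightarrow> 'n \<Rightarrow> complex \<Rightarrow> complex ^ 'n ^ 'm" where
  "matrix_unit a b z = (\<chi> i j. if i = a \<and> j = b then z else 0)"

lemma matrix_unit_mult: "matrix_unit a b z ** matrix_unit b c w = matrix_unit a c (z * w)"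
  unfolding matrix_unit_def matrix_matrix_mult_def
  by (simp add: vec_eq_iff if_distrib[of "\<lambda>u. u * _"] sum.delta' cong: if_cong)

lemma adjoint_matrix_unit: "adjoint_cmat (matrix_unit a b z) = matrix_unit b a (cnj z)"
  unfolding adjoint_cmat_def matrix_unit_def by (auto simp: vec_eq_iff)

lemma matrix_unit_mult_axis: "matrix_unit a b z *v axis b w = axis a (z * w)"
  unfolding matrix_unit_def matrix_vector_mult_def axis_def
  by (simp add: vec_eq_iff if_distrib[of "\<lambda>u. u * _"] sum.delta' cong: if_cong)

lemma matrix_unit_0: "matrix_unit a b 0 = 0"
  unfolding matrix_unit_def by (simp add: vec_eq_iff)

lemma frob_norm_matrix_unit: "frob_norm (matrix_unit a b z) = cmod z"
proof -
  have "(\<Sum>j\<in>UNIV. (cmod (matrix_unit a b z $ i $ j))\<^sup>2) = (if i = a then (cmod z)\<^sup>2 else 0)" for i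
    unfolding matrix_unit_def
    by (cases "i = a") (simp_all add: if_distrib[of "\<lambda>u. (cmod u)\<^sup>2"] sum.delta' cong: if_cong)
  then show ?thesis
    unfolding frob_norm_def by (simp add: sum.delta')
qed

lemma norm_axis: "norm (axis i (z::complex)) = cmod z"
  unfolding norm_vec_def L2_set_def axis_def
  by (simp add: if_distrib[of "\<lambda>u. (cmod u)\<^sup>2"] sum.delta' cong: if_cong)

text \<open>As \<open>inverse 0 = 0\<close>, the products \<open>z * inverse z\<close> and \<open>inverse z * z\<close> are \<open>0\<close> or \<open>1\<close>, hence real.\<close>

lemma pinv_matrix_unit: "pinv (matrix_unit a b z) = matrix_unit b a (inverse z)"
  by (rule pinv_eqI, cases "z = 0") (simp_all add: penrose_def matrix_unit_mult adjoint_matrix_unit)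

definition halting_matrix :: "'m \<Rightarrow> 'n \<Rightarrow> nat \<Rightarrow> complex ^ 'n ^ 'm" where
  "halting_matrix a b e = matrix_unit a b (complex_of_real (halting_weight e))"

lemma computable_complex_seq_of_real:
  "computable_real_seq x \<Longrightarrow> computable_complex_seq (\<lambda>k. complex_of_real (x k))"
  unfolding computable_complex_seq_def using computable_real_seq_const[of 0] by simp

lemma computable_complex_seq_0: "computable_complex_seq (\<lambda>_. 0)"
  using computable_complex_seq_of_real[OF computable_real_seq_const[of 0]] by simp

lemma computable_complex_seq_1: "computable_complex_seq (\<lambda>_. 1)"
  using computable_complex_seq_of_real[OF computable_real_seq_const[of 1]] by simp

lemma computable_complex_seq_If_0:
  "computable_complex_seq z \<Longrightarrow> computable_complex_seq (\<lambda>k. if P then z k else 0)"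
  by (cases P) (simp_all add: computable_complex_seq_0)

lemma computable_cmat_seq_matrix_unit:
  "computable_complex_seq z \<Longrightarrow> computable_cmat_seq (\<lambda>k. matrix_unit a b (z k))"
  unfolding computable_cmat_seq_def matrix_unit_def by (simp add: computable_complex_seq_If_0)

lemma computable_cvec_seq_axis: "computable_complex_seq z \<Longrightarrow> computable_cvec_seq (\<lambda>k. axis i (z k))"
  unfolding computable_cvec_seq_def axis_def by (simp add: computable_complex_seq_If_0)

lemma computable_halting_matrix: "computable_cmat_seq (halting_matrix a b)"
  unfolding halting_matrix_def
  by (intro computable_cmat_seq_matrix_unit computable_complex_seq_of_real computable_halting_weight)

lemma computable_halting_matrix_axis: "computable_pair_seq (\<lambda>e. (halting_matrix a b e, axis a 1))"
  unfolding computable_pair_seq_def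
  using computable_halting_matrix[of a b] computable_cvec_seq_axis[OF computable_complex_seq_1] by simp

lemma pinv_halting_matrix:
  "pinv (halting_matrix a b e) = matrix_unit b a (complex_of_real (inverse (halting_weight e)))"
  unfolding halting_matrix_def pinv_matrix_unit by simp

lemma frob_norm_halting_matrix: "frob_norm (halting_matrix a b e) = halting_weight e"
  by (simp add: halting_matrix_def frob_norm_matrix_unit halting_weight_nonneg)

lemma frob_norm_pinv_halting_matrix:
  "frob_norm (pinv (halting_matrix a b e)) = inverse (halting_weight e)"
  by (simp add: pinv_halting_matrix frob_norm_matrix_unit halting_weight_nonneg del: of_real_inverse)

lemma lsq_solution_halting_matrix:
  "lsq_solution (halting_matrix a b e) (axis a 1) = axis b (complex_of_real (inverse (halting_weight e)))"
  unfolding lsq_solution_def pinv_halting_matrix by (simp add: matrix_unit_mult_axis)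

lemma lsq_value_halting_matrix:
  "lsq_value (halting_matrix a b e) (axis a 1) = (if halts_on_self e then 0 else 1)"
proof (cases "halts_on_self e")
  case True
  then have "halting_weight e \<noteq> 0"
    by (simp add: halting_weight_eq_0_iff)
  then have "halting_matrix a b e *v lsq_solution (halting_matrix a b e) (axis a 1) = axis a 1"
    unfolding lsq_solution_halting_matrix unfolding halting_matrix_def
    by (simp add: matrix_unit_mult_axis del: of_real_inverse flip: of_real_mult)
  then have "0 \<in> range (\<lambda>x. norm (halting_matrix a b e *v x - axis a 1))"
    by (metis (no_types, lifting) diff_self norm_zero rangeI)
  with True show ?thesis
    unfolding lsq_value_def by (simp, intro cInf_eq_minimum) auto
next
  case False
  then have "range (\<lambda>x. norm (halting_matrix a b e *v x - axis a 1)) = {1}"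
    by (simp add: halting_matrix_def halting_weight_eq_0 matrix_unit_0 norm_axis)
  with False show ?thesis
    unfolding lsq_value_def by simp
qed

lemma not_computable_pinv_halting_matrix: "\<not> computable_cmat_seq (\<lambda>e. pinv (halting_matrix a b e))"
proof
  assume "computable_cmat_seq (\<lambda>e. pinv (halting_matrix a b e))"
  then have "computable_complex_seq (\<lambda>e. pinv (halting_matrix a b e) $ b $ a)"
    unfolding computable_cmat_seq_def by blast
  then have "computable_real_seq (\<lambda>e. inverse (halting_weight e))"
    unfolding computable_complex_seq_def pinv_halting_matrix
    by (simp add: matrix_unit_def del: of_real_inverse)
  with not_computable_inverse_halting_weight show False ..
qed

lemma not_computable_frob_norm_pinv_halting_matrix:
  "\<not> computable_real_seq (\<lambda>e. frob_norm (pinv (halting_matrix a b e)))"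
  using not_computable_inverse_halting_weight by (simp add: frob_norm_pinv_halting_matrix)

lemma not_computable_lsq_value_halting_matrix:
  "\<not> computable_real_seq (\<lambda>e. lsq_value (halting_matrix a b e) (axis a 1))"
  by (rule not_computable_if_separates_nonhalting) (simp_all add: lsq_value_halting_matrix)

lemma not_computable_lsq_solution_halting_matrix:
  "\<not> computable_cvec_seq (\<lambda>e. lsq_solution (halting_matrix a b e) (axis a 1))"
proof
  assume "computable_cvec_seq (\<lambda>e. lsq_solution (halting_matrix a b e) (axis a 1))"
  then have "computable_complex_seq (\<lambda>e. lsq_solution (halting_matrix a b e) (axis a 1) $ b)"
    unfolding computable_cvec_seq_def by blast
  then have "computable_real_seq (\<lambda>e. inverse (halting_weight e))"
    unfolding computable_complex_seq_def lsq_solution_halting_matrix by (simp del: of_real_inverse)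
  with not_computable_inverse_halting_weight show False ..
qed

lemma not_computable_norm_lsq_solution_halting_matrix:
  "\<not> computable_real_seq (\<lambda>e. norm (lsq_solution (halting_matrix a b e) (axis a 1)))"
  using not_computable_inverse_halting_weight
  by (simp add: lsq_solution_halting_matrix norm_axis halting_weight_nonneg del: of_real_inverse)

lemma not_computable_condition_halting_matrix:
  "\<not> computable_real_seq (\<lambda>e. frob_norm (halting_matrix a b e) * frob_norm (pinv (halting_matrix a b e)))"
  by (rule not_computable_if_separates_halting)
    (simp_all add: frob_norm_halting_matrix frob_norm_pinv_halting_matrix
      halting_weight_eq_0_iff halting_weight_eq_0)

lemma not_banach_mazur_computableI: "P s \<Longrightarrow> \<not> Q (\<lambda>k. f (s k)) \<Longrightarrow> \<not> banach_mazur_computable P Q f"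
  unfolding banach_mazur_computable_def by blast

theorem theorem3p1:
  assumes "CARD('m::finite) \<ge> 2" and "CARD('n::finite) \<ge> 2"
  shows
    "\<not> banach_mazur_computable computable_cmat_seq computable_cmat_seq
        (pinv :: complex ^ 'n ^ 'm \<Rightarrow> complex ^ 'm ^ 'n)
   \<and> \<not> banach_mazur_computable computable_cmat_seq computable_real_seq
        (\<lambda>A :: complex ^ 'n ^ 'm. frob_norm (pinv A))
   \<and> \<not> banach_mazur_computable computable_pair_seq computable_real_seq
        (\<lambda>(A :: complex ^ 'n ^ 'm, b). lsq_value A b)
   \<and> \<not> banach_mazur_computable computable_pair_seq computable_cvec_seq
        (\<lambda>(A :: complex ^ 'n ^ 'm, b). lsq_solution A b)
   \<and> \<not> banach_mazur_computable computable_pair_seq computable_real_seq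
        (\<lambda>(A :: complex ^ 'n ^ 'm, b). norm (lsq_solution A b))
   \<and> \<not> banach_mazur_computable computable_cmat_seq computable_real_seq
        (\<lambda>A :: complex ^ 'n ^ 'm. frob_norm A * frob_norm (pinv A))"
proof -
  fix a :: 'm and b :: 'n
  note input = computable_halting_matrix[of a b] computable_halting_matrix_axis[of a b]
  show ?thesis
    by (intro conjI not_banach_mazur_computableI[of computable_cmat_seq, OF input(1)]
        not_banach_mazur_computableI[of computable_pair_seq, OF input(2)])
      (simp_all add: not_computable_pinv_halting_matrix not_computable_frob_norm_pinv_halting_matrix
        not_computable_lsq_value_halting_matrix not_computable_lsq_solution_halting_matrix
        not_computable_norm_lsq_solution_halting_matrix not_computable_condition_halting_matrix)
qed

end
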